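(* Let $K$ be an infinite field, let $n\geq 1$, and let $f(x_1,\dots,x_n)=\sum_{\sigma\in S_n}\alpha_\sigma x_{\sigma(1)}\cdots x_{\sigma(n)}$, with $\alpha_\sigma\in K$, be a multilinear polynomial of degree $n$ in noncommuting variables. Let $UT_3=UT_3(K)$ be the algebra of $3\times 3$ upper triangular matrices over $K$, and let $\mathrm{Im}(f)=\{f(a_1,\dots,a_n): a_1,\dots,a_n\in UT_3\}$. Then $\mathrm{Im}(f)$ is equal to one of the following four sets: $UT_3$, $J$, $J^2$, or $\{0\}$.
   Context: $J=J(UT_3)$ denotes the Jacobson radical of $UT_3$, i.e., the set of strictly upper triangular $3\times 3$ matrices over $K$ (matrices whose entries $(i,j)$ are zero whenever $i\geq j$). $J^2$ is the square of $J$, i.e., the set of $3\times 3$ matrices over $K$ whose only possibly nonzero entry is the $(1,3)$ entry. *)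

theory Defs
  imports "HOL-Analysis.Analysis"
begin

text \<open>3x3 matrices over K are 'a^3^3, rows/columns indexed by the type 3 = {0,1,2}
  (ordered 0 < 1 < 2).\<close>

definition UT3 :: "(('a::field)^3^3) set" where
  "UT3 = {A. \<forall>i j. j < i \<longrightarrow> A $ i $ j = 0}"

definition J3 :: "(('a::field)^3^3) set" where
  "J3 = {A. \<forall>i j. j \<le> i \<longrightarrow> A $ i $ j = 0}"

definition J3sq :: "(('a::field)^3^3) set" where
  "J3sq = {A. \<forall>i j. (i, j) \<noteq> (0, 2) \<longrightarrow> A $ i $ j = 0}"

definition msmult :: "'a::field \<Rightarrow> 'a^3^3 \<Rightarrow> 'a^3^3" where
  "msmult c A = (\<chi> i j. c * A $ i $ j)"

text \<open>Evaluation of f(x_1,...,x_n) = sum over sigma in S_n of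
  alpha sigma * x_{sigma 1} ... x_{sigma n} at x_i = a i.\<close>
definition multilin_eval :: "nat \<Rightarrow> ((nat \<Rightarrow> nat) \<Rightarrow> 'a::field) \<Rightarrow> (nat \<Rightarrow> 'a^3^3) \<Rightarrow> 'a^3^3" where
  "multilin_eval n \<alpha> a =
     (\<Sum>\<sigma>\<in>{\<sigma>. \<sigma> permutes {1..n}}.
        msmult (\<alpha> \<sigma>) (foldr (\<lambda>k M. a (\<sigma> k) ** M) [1..<n+1] (mat 1)))"

definition multilin_image :: "nat \<Rightarrow> ((nat \<Rightarrow> nat) \<Rightarrow> 'a::field) \<Rightarrow> ('a^3^3) set" where
  "multilin_image n \<alpha> = {multilin_eval n \<alpha> a | a. \<forall>i\<in>{1..n}. a i \<in> UT3}"

end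

theory Submission
  imports Defs "HOL-Computational_Algebra.Polynomial"
begin

(*
  Let s be the sum of all \<alpha> \<sigma>. The diagonal of f(a) is s times the product of the diagonals
  of the a l, so if s \<noteq> 0 then f(X/s, 1, ..., 1) = X gives all of UT3, and otherwise Im f \<subseteq> J.

  Expanding products of upper triangular matrices, the entry (p, q) of f(a) is
    \<Sum> c(m, B) * (\<Prod>l\<in>B. a l $p$p) * a m $p$q * (\<Prod>l\<notin>B \<union> {m}. a l $q$q),
  where c(m, B) sums the \<alpha> \<sigma> for which exactly the variables in B precede x_m. This holds for
  the adjacent entries (0,1), (1,2) in general, and for every entry when all a l except a m
  are diagonal. If all c(m, B) vanish, Im f lies in J^2 and is closed under scalars, so it is
  J^2 or {0}. If c(m, T) \<noteq> 0, take a l = diag(t^2, t, 1) for l \<in> T and diag(1, t, t^2) for the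
  other l \<noteq> m: then entry (p, q) for p < q is P_pq(t) * a m $p$q, where the top exponent of
  the polynomial P_pq is reached only by B = T, so P_pq \<noteq> 0. As K is infinite, some t is a
  root of none of the P_pq, and solving for the strictly upper triangular a m gives J \<subseteq> Im f.
*)

lemma exhaust_3_0: "(i::3) = 0 \<or> i = 1 \<or> i = 2"
  using exhaust_3[of i] by auto

lemma forall_3_0: "(\<forall>i::3. P i) \<longleftrightarrow> P 0 \<and> P 1 \<and> P 2"
  by (metis exhaust_3_0)

lemma less_3_iff: "(i::3) < j \<longleftrightarrow> i = 0 \<and> j = 1 \<or> i = 1 \<and> j = 2 \<or> i = 0 \<and> j = 2"
proof -
  have "(0::3) < 1" "(1::3) < 2" "(0::3) < 2" "\<not> (1::3) < 0" "\<not> (2::3) < 0" "\<not> (2::3) < 1"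
    by (simp_all add: less_bit1_def bit1.Rep_0 bit1.Rep_1 bit1.Rep_numeral)
  then show ?thesis
    using exhaust_3_0[of i] exhaust_3_0[of j] by (elim disjE) simp_all
qed

lemma matrix_mult_3_entry:
  "((A::'a::semiring_1^3^3) ** B)$i$j = A$i$0 * B$0$j + A$i$1 * B$1$j + A$i$2 * B$2$j"
proof -
  have three: "(3::3) = 0" by simp
  show ?thesis unfolding matrix_matrix_mult_def sum_3 three by (simp add: algebra_simps)
qed

lemma UT3_iff: "A \<in> UT3 \<longleftrightarrow> A$1$0 = 0 \<and> A$2$0 = 0 \<and> A$2$1 = 0"
  unfolding UT3_def by (auto simp: forall_3_0 less_3_iff)

lemma J3_iff: "A \<in> J3 \<longleftrightarrow> A \<in> UT3 \<and> A$0$0 = 0 \<and> A$1$1 = 0 \<and> A$2$2 = 0"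
  unfolding J3_def UT3_iff by (auto simp: forall_3_0 le_less less_3_iff)

lemma J3sq_iff: "A \<in> J3sq \<longleftrightarrow> A \<in> J3 \<and> A$0$1 = 0 \<and> A$1$2 = 0"
  unfolding J3sq_def J3_iff UT3_iff by (auto simp: forall_3_0)

lemma J3_eqI:
  assumes "A \<in> J3" "B \<in> J3" "A$0$1 = B$0$1" "A$1$2 = B$1$2" "A$0$2 = B$0$2"
  shows "A = B"
  using assms by (simp add: J3_iff UT3_iff vec_eq_iff forall_3_0)

lemma mat_1_UT3: "mat 1 \<in> UT3"
  by (simp add: UT3_iff mat_def)

lemma matrix_mult_UT3: "A \<in> UT3 \<Longrightarrow> B \<in> UT3 \<Longrightarrow> A ** B \<in> UT3"
  by (simp add: UT3_iff matrix_mult_3_entry)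

lemma msmult_UT3: "A \<in> UT3 \<Longrightarrow> msmult c A \<in> UT3"
  by (simp add: UT3_iff msmult_def)

lemma UT3_mult_diag_entry: "A \<in> UT3 \<Longrightarrow> B \<in> UT3 \<Longrightarrow> (A ** B)$i$i = A$i$i * B$i$i"
  using exhaust_3_0[of i] by (auto simp: UT3_iff matrix_mult_3_entry)

lemma UT3_mult_adjacent_entry:
  "(p, q) \<in> {(0, 1), (1, 2)} \<Longrightarrow> A \<in> UT3 \<Longrightarrow> B \<in> UT3 \<Longrightarrow>
    (A ** B)$p$q = A$p$p * B$p$q + A$p$q * B$q$q"
  by (auto simp: UT3_iff matrix_mult_3_entry)

lemma msmult_matrix_mult_left: "msmult c A ** B = msmult c (A ** B)"
  by (simp add: vec_eq_iff msmult_def matrix_matrix_mult_def sum_distrib_left mult.assoc)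

lemma msmult_matrix_mult_right: "A ** msmult c B = msmult c (A ** B)"
  by (simp add: vec_eq_iff msmult_def matrix_matrix_mult_def sum_distrib_left algebra_simps)

definition diagonal_matrix :: "'a::zero^'n^'n \<Rightarrow> bool" where
  "diagonal_matrix A \<longleftrightarrow> (\<forall>i j. i \<noteq> j \<longrightarrow> A$i$j = 0)"

lemma diagonal_matrix_mult_left:
  fixes D A :: "'a::semiring_1^'n^'n"
  assumes "diagonal_matrix D"
  shows "(D ** A)$i$j = D$i$i * A$i$j"
proof -
  have "(D ** A)$i$j = (\<Sum>k\<in>UNIV. D$i$k * A$k$j)"
    by (simp add: matrix_matrix_mult_def)
  also have "\<dots> = (\<Sum>k\<in>UNIV. if k = i then D$i$i * A$i$j else 0)"
    using assms by (intro sum.cong) (auto simp: diagonal_matrix_def)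
  finally show ?thesis by simp
qed

lemma diagonal_matrix_mult_right:
  fixes D A :: "'a::semiring_1^'n^'n"
  assumes "diagonal_matrix D"
  shows "(A ** D)$i$j = A$i$j * D$j$j"
proof -
  have "(A ** D)$i$j = (\<Sum>k\<in>UNIV. A$i$k * D$k$j)"
    by (simp add: matrix_matrix_mult_def)
  also have "\<dots> = (\<Sum>k\<in>UNIV. if k = j then A$i$j * D$j$j else 0)"
    using assms by (intro sum.cong) (auto simp: diagonal_matrix_def)
  finally show ?thesis by simp
qed

lemma diagonal_matrix_mat_1: "diagonal_matrix (mat 1)"
  by (simp add: diagonal_matrix_def mat_def)

lemma diagonal_matrix_mult:
  "diagonal_matrix A \<Longrightarrow> diagonal_matrix B \<Longrightarrow> diagonal_matrix (A ** B)"
  by (simp add: diagonal_matrix_def diagonal_matrix_mult_left)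

lemma diagonal_matrix_UT3: "diagonal_matrix A \<Longrightarrow> A \<in> UT3"
  by (simp add: diagonal_matrix_def UT3_iff)

definition monomial_eval :: "(nat \<Rightarrow> 'a::field^3^3) \<Rightarrow> nat list \<Rightarrow> 'a^3^3" where
  "monomial_eval a xs = foldr (\<lambda>l M. a l ** M) xs (mat 1)"

lemma monomial_eval_Nil [simp]: "monomial_eval a [] = mat 1"
  and monomial_eval_Cons [simp]: "monomial_eval a (x # xs) = a x ** monomial_eval a xs"
  by (simp_all add: monomial_eval_def)

lemma monomial_eval_append: "monomial_eval a (xs @ ys) = monomial_eval a xs ** monomial_eval a ys"
  by (induction xs) (simp_all add: matrix_mul_lid matrix_mul_assoc)

lemma monomial_eval_cong:
  "(\<And>l. l \<in> set xs \<Longrightarrow> a l = b l) \<Longrightarrow> monomial_eval a xs = monomial_eval b xs"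
  by (induction xs) simp_all

lemma monomial_eval_mat_1: "monomial_eval (\<lambda>_. mat 1) xs = mat 1"
  by (induction xs) (simp_all add: matrix_mul_lid)

lemma monomial_eval_update:
  assumes "i \<notin> set us" "i \<notin> set vs"
  shows "monomial_eval (a(i := X)) (us @ i # vs) = monomial_eval a us ** X ** monomial_eval a vs"
proof -
  have "monomial_eval (a(i := X)) us = monomial_eval a us"
    "monomial_eval (a(i := X)) vs = monomial_eval a vs"
    using assms by (auto intro: monomial_eval_cong)
  then show ?thesis by (simp add: monomial_eval_append matrix_mul_assoc)
qed

lemma monomial_eval_UT3: "\<forall>l\<in>set xs. a l \<in> UT3 \<Longrightarrow> monomial_eval a xs \<in> UT3"
  by (induction xs) (simp_all add: mat_1_UT3 matrix_mult_UT3)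

lemma monomial_eval_diagonal_matrix:
  "\<forall>l\<in>set xs. diagonal_matrix (a l) \<Longrightarrow> diagonal_matrix (monomial_eval a xs)"
  by (induction xs) (simp_all add: diagonal_matrix_mat_1 diagonal_matrix_mult)

lemma monomial_eval_diag_entry:
  "distinct xs \<Longrightarrow> \<forall>l\<in>set xs. a l \<in> UT3 \<Longrightarrow>
    (monomial_eval a xs)$i$i = (\<Prod>l\<in>set xs. a l$i$i)"
  by (induction xs) (simp_all add: UT3_mult_diag_entry monomial_eval_UT3 mat_def)

definition preceding :: "nat list \<Rightarrow> nat \<Rightarrow> nat set" where
  "preceding xs m = set (takeWhile (\<lambda>l. l \<noteq> m) xs)"

lemma preceding_Cons: "preceding (x # xs) m = (if x = m then {} else insert x (preceding xs m))"
  by (cases "x = m") (simp_all add: preceding_def)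

lemma preceding_subset: "preceding xs m \<subseteq> set xs - {m}"
  by (auto simp: preceding_def dest: set_takeWhileD)

lemma preceding_append_Cons: "m \<notin> set us \<Longrightarrow> preceding (us @ m # vs) m = set us"
  unfolding preceding_def by (subst takeWhile_append2) auto

definition entry_term ::
  "(nat \<Rightarrow> 'a::field^3^3) \<Rightarrow> nat set \<Rightarrow> 3 \<Rightarrow> 3 \<Rightarrow> nat \<Rightarrow> nat set \<Rightarrow> 'a" where
  "entry_term a S p q m B = (\<Prod>l\<in>B. a l$p$p) * a m$p$q * (\<Prod>l\<in>S - B - {m}. a l$q$q)"

lemma monomial_eval_adjacent_entry:
  assumes "distinct xs" "\<forall>l\<in>set xs. a l \<in> UT3" and pq: "(p, q) \<in> {(0, 1), (1, 2)}"
  shows "(monomial_eval a xs)$p$q = (\<Sum>m\<in>set xs. entry_term a (set xs) p q m (preceding xs m))"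
  using assms(1,2)
proof (induction xs)
  case Nil
  then show ?case using pq by (auto simp: mat_def)
next
  case (Cons x ys)
  let ?W = "monomial_eval a ys"
  have x: "x \<notin> set ys" "a x \<in> UT3" and ys: "distinct ys" "\<forall>l\<in>set ys. a l \<in> UT3"
    using Cons.prems by auto
  have "entry_term a (set (x # ys)) p q m (preceding (x # ys) m)
      = a x$p$p * entry_term a (set ys) p q m (preceding ys m)" if "m \<in> set ys" for m
  proof -
    have "x \<notin> preceding ys m" using x(1) preceding_subset by blast
    moreover have "set (x # ys) - insert x (preceding ys m) - {m} = set ys - preceding ys m - {m}"
      using x(1) by auto
    ultimately show ?thesis using that x(1)
      by (auto simp: entry_term_def preceding_Cons finite_subset[OF preceding_subset])
  qed
  moreover have "entry_term a (set (x # ys)) p q x (preceding (x # ys) x) = a x$p$q * ?W$q$q"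
    using x(1) ys by (simp add: entry_term_def preceding_Cons monomial_eval_diag_entry)
  ultimately have "(\<Sum>m\<in>set (x # ys). entry_term a (set (x # ys)) p q m (preceding (x # ys) m))
      = a x$p$q * ?W$q$q + a x$p$p * (\<Sum>m\<in>set ys. entry_term a (set ys) p q m (preceding ys m))"
    using x(1) by (simp add: sum_distrib_left)
  also have "\<dots> = (a x ** ?W)$p$q"
    using UT3_mult_adjacent_entry[OF pq x(2) monomial_eval_UT3[OF ys(2)]] Cons.IH[OF ys] by simp
  finally show ?case by simp
qed

lemma split_list_distinct:
  assumes "distinct xs" "i \<in> set xs"
  obtains us vs where "xs = us @ i # vs" "i \<notin> set us" "i \<notin> set vs"
  using assms split_list[of i xs] by auto

lemma monomial_eval_one_nondiagonal_entry:
  assumes "distinct xs" "m \<in> set xs" "\<forall>l\<in>set xs - {m}. diagonal_matrix (a l)"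
  shows "(monomial_eval a xs)$p$q = entry_term a (set xs) p q m (preceding xs m)"
proof -
  obtain us vs where xs: "xs = us @ m # vs" "m \<notin> set us" "m \<notin> set vs"
    using assms(1,2) by (rule split_list_distinct)
  have diag: "diagonal_matrix (monomial_eval a us)" "diagonal_matrix (monomial_eval a vs)"
    using assms(3) xs by (auto intro!: monomial_eval_diagonal_matrix)
  have "monomial_eval a xs = monomial_eval a us ** a m ** monomial_eval a vs"
    using monomial_eval_update[OF xs(2,3), of a "a m"] xs(1) by simp
  then have "(monomial_eval a xs)$p$q
      = (monomial_eval a us)$p$p * a m$p$q * (monomial_eval a vs)$q$q"
    using diag by (simp add: diagonal_matrix_mult_left diagonal_matrix_mult_right)
  moreover have "set xs - set us - {m} = set vs" using assms(1) xs by auto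
  moreover have "(monomial_eval a us)$p$p = (\<Prod>l\<in>set us. a l$p$p)"
    "(monomial_eval a vs)$q$q = (\<Prod>l\<in>set vs. a l$q$q)"
    using assms xs by (auto intro!: monomial_eval_diag_entry diagonal_matrix_UT3)
  ultimately show ?thesis by (simp add: entry_term_def xs(1) preceding_append_Cons[OF xs(2)])
qed

definition perm_word :: "nat \<Rightarrow> (nat \<Rightarrow> nat) \<Rightarrow> nat list" where
  "perm_word n \<sigma> = map \<sigma> [1..<n+1]"

lemma distinct_perm_word: "\<sigma> permutes {1..n} \<Longrightarrow> distinct (perm_word n \<sigma>)"
  unfolding perm_word_def by (simp add: distinct_map inj_on_subset[OF permutes_inj] del: upt_Suc)

lemma set_perm_word: "\<sigma> permutes {1..n} \<Longrightarrow> set (perm_word n \<sigma>) = {1..n}"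
  unfolding perm_word_def using permutes_image
  by (simp add: atLeastLessThanSuc_atLeastAtMost del: upt_Suc)

lemma multilin_eval_entry:
  "(multilin_eval n \<alpha> a)$i$j
    = (\<Sum>\<sigma> | \<sigma> permutes {1..n}. \<alpha> \<sigma> * (monomial_eval a (perm_word n \<sigma>))$i$j)"
  by (simp add: multilin_eval_def msmult_def monomial_eval_def perm_word_def foldr_map o_def
      del: upt_Suc)

lemma multilin_imageI: "\<forall>l\<in>{1..n}. a l \<in> UT3 \<Longrightarrow> multilin_eval n \<alpha> a \<in> multilin_image n \<alpha>"
  unfolding multilin_image_def by blast

lemma multilin_imageE:
  fixes M :: "'a::field^3^3"
  assumes "M \<in> multilin_image n \<alpha>"
  obtains a :: "nat \<Rightarrow> 'a^3^3" where "\<forall>l\<in>{1..n}. a l \<in> UT3" "M = multilin_eval n \<alpha> a"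
  using assms unfolding multilin_image_def by blast

lemma multilin_eval_UT3:
  assumes "\<forall>l\<in>{1..n}. a l \<in> UT3"
  shows "multilin_eval n \<alpha> a \<in> UT3"
proof -
  have "monomial_eval a (perm_word n \<sigma>) \<in> UT3" if "\<sigma> permutes {1..n}" for \<sigma>
    using assms set_perm_word[OF that] by (intro monomial_eval_UT3) auto
  then show ?thesis by (simp add: UT3_iff multilin_eval_entry)
qed

lemma multilin_eval_diag_entry:
  assumes "\<forall>l\<in>{1..n}. a l \<in> UT3"
  shows "(multilin_eval n \<alpha> a)$i$i = (\<Sum>\<sigma> | \<sigma> permutes {1..n}. \<alpha> \<sigma>) * (\<Prod>l\<in>{1..n}. a l$i$i)"
proof -
  have "(monomial_eval a (perm_word n \<sigma>))$i$i = (\<Prod>l\<in>{1..n}. a l$i$i)"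
    if "\<sigma> permutes {1..n}" for \<sigma>
    using assms distinct_perm_word[OF that] set_perm_word[OF that]
    by (simp add: monomial_eval_diag_entry)
  then show ?thesis by (simp add: multilin_eval_entry sum_distrib_right)
qed

lemma perm_word_split:
  assumes "\<sigma> permutes {1..n}" "i \<in> {1..n}"
  obtains us vs where "perm_word n \<sigma> = us @ i # vs" "i \<notin> set us" "i \<notin> set vs"
  using split_list_distinct[OF distinct_perm_word[OF assms(1)]] set_perm_word[OF assms(1)] assms(2)
  by blast

lemma multilin_eval_scale:
  assumes "i \<in> {1..n}"
  shows "multilin_eval n \<alpha> (a(i := msmult c (a i))) = msmult c (multilin_eval n \<alpha> a)"
proof -
  have "monomial_eval (a(i := msmult c (a i))) (perm_word n \<sigma>)
      = msmult c (monomial_eval a (perm_word n \<sigma>))" if \<sigma>: "\<sigma> permutes {1..n}" for \<sigma>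
  proof -
    obtain us vs where "perm_word n \<sigma> = us @ i # vs" "i \<notin> set us" "i \<notin> set vs"
      using perm_word_split[OF \<sigma> assms] .
    then show ?thesis
      using monomial_eval_update[of i us vs a "a i"] monomial_eval_update[of i us vs a]
      by (simp add: msmult_matrix_mult_left msmult_matrix_mult_right)
  qed
  then show ?thesis
    by (simp add: vec_eq_iff multilin_eval_entry msmult_def sum_distrib_left ac_simps)
qed

lemma multilin_eval_single:
  assumes "i \<in> {1..n}"
  shows "multilin_eval n \<alpha> ((\<lambda>_. mat 1)(i := X)) = msmult (\<Sum>\<sigma> | \<sigma> permutes {1..n}. \<alpha> \<sigma>) X"
proof -
  have "monomial_eval ((\<lambda>_. mat 1)(i := X)) (perm_word n \<sigma>) = X"
    if \<sigma>: "\<sigma> permutes {1..n}" for \<sigma>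
  proof -
    obtain us vs where "perm_word n \<sigma> = us @ i # vs" "i \<notin> set us" "i \<notin> set vs"
      using perm_word_split[OF \<sigma> assms] .
    then show ?thesis by (simp add: monomial_eval_update monomial_eval_mat_1)
  qed
  then show ?thesis
    by (simp add: vec_eq_iff multilin_eval_entry msmult_def sum_distrib_right)
qed

definition entry_coeff :: "nat \<Rightarrow> ((nat \<Rightarrow> nat) \<Rightarrow> 'a::field) \<Rightarrow> nat \<Rightarrow> nat set \<Rightarrow> 'a" where
  "entry_coeff n \<alpha> m B = (\<Sum>\<sigma> | \<sigma> permutes {1..n} \<and> preceding (perm_word n \<sigma>) m = B. \<alpha> \<sigma>)"

lemma sum_permutes_group_preceding:
  "(\<Sum>\<sigma> | \<sigma> permutes {1..n}. \<alpha> \<sigma> * h (preceding (perm_word n \<sigma>) m))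
     = (\<Sum>B\<in>Pow ({1..n} - {m}). entry_coeff n \<alpha> m B * h B)"
proof -
  let ?P = "{\<sigma>. \<sigma> permutes {1..n}}" and ?g = "\<lambda>\<sigma>. preceding (perm_word n \<sigma>) m"
  have "?g ` ?P \<subseteq> Pow ({1..n} - {m})"
    using preceding_subset set_perm_word by fastforce
  then have "(\<Sum>\<sigma>\<in>?P. \<alpha> \<sigma> * h (?g \<sigma>))
      = (\<Sum>B\<in>Pow ({1..n} - {m}). \<Sum>\<sigma>\<in>{\<sigma> \<in> ?P. ?g \<sigma> = B}. \<alpha> \<sigma> * h (?g \<sigma>))"
    by (intro sum.group[symmetric]) (auto simp: finite_permutations)
  also have "\<dots> = (\<Sum>B\<in>Pow ({1..n} - {m}). entry_coeff n \<alpha> m B * h B)"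
    unfolding entry_coeff_def sum_distrib_right by (intro sum.cong) auto
  finally show ?thesis by simp
qed

lemma multilin_eval_adjacent_entry:
  assumes "\<forall>l\<in>{1..n}. a l \<in> UT3" "(p, q) \<in> {(0, 1), (1, 2)}"
  shows "(multilin_eval n \<alpha> a)$p$q
    = (\<Sum>m\<in>{1..n}. \<Sum>B\<in>Pow ({1..n} - {m}). entry_coeff n \<alpha> m B * entry_term a {1..n} p q m B)"
proof -
  have "(monomial_eval a (perm_word n \<sigma>))$p$q
      = (\<Sum>m\<in>{1..n}. entry_term a {1..n} p q m (preceding (perm_word n \<sigma>) m))"
    if "\<sigma> permutes {1..n}" for \<sigma>
    using assms distinct_perm_word[OF that] set_perm_word[OF that]
    by (simp add: monomial_eval_adjacent_entry)
  then have "(multilin_eval n \<alpha> a)$p$q = (\<Sum>\<sigma> | \<sigma> permutes {1..n}. \<Sum>m\<in>{1..n}.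
      \<alpha> \<sigma> * entry_term a {1..n} p q m (preceding (perm_word n \<sigma>) m))"
    by (simp add: multilin_eval_entry sum_distrib_left)
  also have "\<dots> = (\<Sum>m\<in>{1..n}. \<Sum>\<sigma> | \<sigma> permutes {1..n}.
      \<alpha> \<sigma> * entry_term a {1..n} p q m (preceding (perm_word n \<sigma>) m))"
    by (rule sum.swap)
  also have "\<dots> = (\<Sum>m\<in>{1..n}. \<Sum>B\<in>Pow ({1..n} - {m}).
      entry_coeff n \<alpha> m B * entry_term a {1..n} p q m B)"
    by (intro sum.cong refl sum_permutes_group_preceding)
  finally show ?thesis .
qed

lemma multilin_eval_one_nondiagonal_entry:
  assumes "m \<in> {1..n}" "\<forall>l\<in>{1..n} - {m}. diagonal_matrix (a l)"
  shows "(multilin_eval n \<alpha> a)$p$q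
    = (\<Sum>B\<in>Pow ({1..n} - {m}). entry_coeff n \<alpha> m B * entry_term a {1..n} p q m B)"
proof -
  have "(monomial_eval a (perm_word n \<sigma>))$p$q
      = entry_term a {1..n} p q m (preceding (perm_word n \<sigma>) m)" if "\<sigma> permutes {1..n}" for \<sigma>
    using assms distinct_perm_word[OF that] set_perm_word[OF that]
    by (simp add: monomial_eval_one_nondiagonal_entry)
  then have "(multilin_eval n \<alpha> a)$p$q = (\<Sum>\<sigma> | \<sigma> permutes {1..n}.
      \<alpha> \<sigma> * entry_term a {1..n} p q m (preceding (perm_word n \<sigma>) m))"
    by (simp add: multilin_eval_entry)
  then show ?thesis by (simp only: sum_permutes_group_preceding)
qed

lemma coeff_sum_monom_unique_exponent:
  assumes "finite A" "T \<in> A" "\<forall>B\<in>A - {T}. e B \<noteq> e T"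
  shows "coeff (\<Sum>B\<in>A. monom (c B) (e B)) (e T) = c T"
proof -
  have "coeff (\<Sum>B\<in>A. monom (c B) (e B)) (e T) = (\<Sum>B\<in>A. if B = T then c B else 0)"
    unfolding coeff_sum coeff_monom using assms(3) by (intro sum.cong) auto
  then show ?thesis using assms(1,2) by simp
qed

lemma sum_if_less_sum_if:
  fixes u v :: "'b \<Rightarrow> 'c::ordered_cancel_comm_monoid_add"
  assumes "finite V" "B \<subseteq> V" "T \<subseteq> V" "B \<noteq> T" "\<forall>l\<in>T. v l < u l" "\<forall>l\<in>V - T. u l < v l"
  shows "(\<Sum>l\<in>V. if l \<in> B then u l else v l) < (\<Sum>l\<in>V. if l \<in> T then u l else v l)"
proof (rule sum_strict_mono_ex1[OF assms(1)])
  show "\<forall>l\<in>V. (if l \<in> B then u l else v l) \<le> (if l \<in> T then u l else v l)"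
    using assms(5,6) by (auto intro: less_imp_le)
  obtain l where "l \<in> V" "l \<in> B \<longleftrightarrow> l \<notin> T"
    using assms(2-4) by blast
  then show "\<exists>l\<in>V. (if l \<in> B then u l else v l) < (if l \<in> T then u l else v l)"
    using assms(5,6) by auto
qed

definition weight_poly ::
  "nat set \<Rightarrow> (nat set \<Rightarrow> 'a::field) \<Rightarrow> (nat \<Rightarrow> nat) \<Rightarrow> (nat \<Rightarrow> nat) \<Rightarrow> 'a poly" where
  "weight_poly V c u v = (\<Sum>B\<in>Pow V. monom (c B) (\<Sum>l\<in>V. if l \<in> B then u l else v l))"

lemma poly_weight_poly:
  "poly (weight_poly V c u v) t = (\<Sum>B\<in>Pow V. c B * t ^ (\<Sum>l\<in>V. if l \<in> B then u l else v l))"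
  by (simp add: weight_poly_def poly_sum poly_monom)

lemma weight_poly_nonzero:
  assumes "finite V" "T \<subseteq> V" "c T \<noteq> 0" "\<forall>l\<in>T. v l < u l" "\<forall>l\<in>V - T. u l < v l"
  shows "weight_poly V c u v \<noteq> 0"
proof -
  have "coeff (weight_poly V c u v) (\<Sum>l\<in>V. if l \<in> T then u l else v l) = c T"
    unfolding weight_poly_def
  proof (rule coeff_sum_monom_unique_exponent)
    show "finite (Pow V)" "T \<in> Pow V" using assms(1,2) by simp_all
    show "\<forall>B\<in>Pow V - {T}.
        (\<Sum>l\<in>V. if l \<in> B then u l else v l) \<noteq> (\<Sum>l\<in>V. if l \<in> T then u l else v l)"
      using sum_if_less_sum_if[OF assms(1) _ assms(2) _ assms(4,5)] by (auto simp: less_imp_neq)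
  qed
  then show ?thesis using assms(3) by auto
qed

lemma infinite_poly_nonroot:
  fixes p :: "'a::idom poly"
  assumes "infinite (UNIV :: 'a set)" "p \<noteq> 0"
  obtains x where "poly p x \<noteq> 0"
  using ex_new_if_finite[OF assms(1) poly_roots_finite[OF assms(2)]] by auto

lemma entry_term_diagonal_powers:
  assumes "finite S" "B \<subseteq> S - {m}" "\<forall>l\<in>S - {m}. \<forall>i. a l$i$i = t ^ w l i"
  shows "entry_term a S p q m B = t ^ (\<Sum>l\<in>S - {m}. if l \<in> B then w l p else w l q) * a m$p$q"
proof -
  have "t ^ (\<Sum>l\<in>S - {m}. if l \<in> B then w l p else w l q)
      = (\<Prod>l\<in>S - {m}. if l \<in> B then a l$p$p else a l$q$q)"
    unfolding power_sum using assms(3) by (intro prod.cong) auto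
  also have "\<dots> = (\<Prod>l\<in>B. a l$p$p) * (\<Prod>l\<in>S - B - {m}. a l$q$q)"
  proof -
    have "(S - {m}) \<inter> {l. l \<in> B} = B" "(S - {m}) \<inter> - {l. l \<in> B} = S - B - {m}"
      using assms(2) by auto
    then show ?thesis using prod.If_cases[of "S - {m}" "\<lambda>l. l \<in> B"] assms(1) by simp
  qed
  finally show ?thesis by (simp add: entry_term_def ac_simps)
qed

lemma multilin_eval_diagonal_powers_entry:
  assumes "m \<in> {1..n}"
    and "\<forall>l\<in>{1..n} - {m}. diagonal_matrix (a l) \<and> (\<forall>i. a l$i$i = t ^ w l i)"
  shows "(multilin_eval n \<alpha> a)$p$q
    = poly (weight_poly ({1..n} - {m}) (entry_coeff n \<alpha> m) (\<lambda>l. w l p) (\<lambda>l. w l q)) t * a m$p$q"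
proof -
  have "(multilin_eval n \<alpha> a)$p$q
      = (\<Sum>B\<in>Pow ({1..n} - {m}). entry_coeff n \<alpha> m B * entry_term a {1..n} p q m B)"
    using assms by (intro multilin_eval_one_nondiagonal_entry) auto
  also have "\<dots> = (\<Sum>B\<in>Pow ({1..n} - {m}).
      entry_coeff n \<alpha> m B * (t ^ (\<Sum>l\<in>{1..n} - {m}. if l \<in> B then w l p else w l q) * a m$p$q))"
    using assms(2) by (intro sum.cong refl arg_cong2[where f = "(*)"] entry_term_diagonal_powers) auto
  finally show ?thesis
    by (simp add: poly_weight_poly sum_distrib_right mult.assoc)
qed

lemma multilin_image_subset_UT3: "multilin_image n \<alpha> \<subseteq> UT3"
  by (metis multilin_imageE multilin_eval_UT3 subsetI)

lemma multilin_image_eq_UT3: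
  assumes "n \<ge> 1" "(\<Sum>\<sigma> | \<sigma> permutes {1..n}. \<alpha> \<sigma>) \<noteq> 0"
  shows "multilin_image n \<alpha> = UT3"
proof
  show "UT3 \<subseteq> multilin_image n \<alpha>"
  proof
    fix X :: "'a^3^3" assume X: "X \<in> UT3"
    define a :: "nat \<Rightarrow> 'a^3^3"
      where "a = (\<lambda>_. mat 1)(1 := msmult (1 / (\<Sum>\<sigma> | \<sigma> permutes {1..n}. \<alpha> \<sigma>)) X)"
    have "multilin_eval n \<alpha> a = X"
      using assms by (simp add: a_def multilin_eval_single msmult_def vec_eq_iff)
    moreover have "\<forall>l\<in>{1..n}. a l \<in> UT3"
      using X by (simp add: a_def mat_1_UT3 msmult_UT3)
    ultimately show "X \<in> multilin_image n \<alpha>"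
      using multilin_imageI by metis
  qed
qed (rule multilin_image_subset_UT3)

lemma multilin_image_subset_J3:
  assumes "(\<Sum>\<sigma> | \<sigma> permutes {1..n}. \<alpha> \<sigma>) = 0"
  shows "multilin_image n \<alpha> \<subseteq> J3"
proof
  fix M assume "M \<in> multilin_image n \<alpha>"
  then obtain a where adm: "\<forall>l\<in>{1..n}. a l \<in> UT3" and "M = multilin_eval n \<alpha> a"
    by (rule multilin_imageE)
  then show "M \<in> J3"
    using multilin_eval_UT3[OF adm] multilin_eval_diag_entry[OF adm] assms by (simp add: J3_iff)
qed

lemma J3_subset_multilin_image:
  fixes \<alpha> :: "(nat \<Rightarrow> nat) \<Rightarrow> 'a::field"
  assumes inf: "infinite (UNIV :: 'a set)" and m: "m \<in> {1..n}" and T: "T \<subseteq> {1..n} - {m}"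
    and cT: "entry_coeff n \<alpha> m T \<noteq> 0" and S0: "(\<Sum>\<sigma> | \<sigma> permutes {1..n}. \<alpha> \<sigma>) = 0"
  shows "J3 \<subseteq> multilin_image n \<alpha>"
proof
  fix M :: "'a^3^3" assume M: "M \<in> J3"
  define r :: "3 \<Rightarrow> nat" where "r i = (if i = 0 then 0 else if i = 1 then 1 else 2)" for i
  define w where "w l i = (if l \<in> T then 2 - r i else r i)" for l i
  define Q where
    "Q p q = weight_poly ({1..n} - {m}) (entry_coeff n \<alpha> m) (\<lambda>l. w l p) (\<lambda>l. w l q)" for p q
  have "Q p q \<noteq> 0" if "p < q" for p q
    unfolding Q_def using that T cT by (intro weight_poly_nonzero) (auto simp: w_def r_def less_3_iff)
  then have "Q 0 1 * Q 1 2 * Q 0 2 \<noteq> 0" by (simp add: less_3_iff)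
  then obtain t where "poly (Q 0 1 * Q 1 2 * Q 0 2) t \<noteq> 0"
    using infinite_poly_nonroot[OF inf] by blast
  then have t: "poly (Q p q) t \<noteq> 0" if "p < q" for p q
    using that by (auto simp: less_3_iff)
  define N :: "'a^3^3" where "N = (\<chi> i j. if i < j then M$i$j / poly (Q i j) t else 0)"
  define D :: "nat \<Rightarrow> 'a^3^3" where "D l = (\<chi> i j. if i = j then t ^ w l i else 0)" for l
  define a where "a = D(m := N)"
  have D: "diagonal_matrix (D l)" "D l$i$i = t ^ w l i" for l i
    by (simp_all add: D_def diagonal_matrix_def)
  have "N \<in> J3" by (simp add: N_def J3_iff UT3_iff less_3_iff)
  then have adm: "\<forall>l\<in>{1..n}. a l \<in> UT3"
    using D by (simp add: a_def J3_iff diagonal_matrix_UT3)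
  have "(multilin_eval n \<alpha> a)$p$q = poly (Q p q) t * N$p$q" for p q
    unfolding Q_def using m D by (subst multilin_eval_diagonal_powers_entry) (auto simp: a_def)
  then have "(multilin_eval n \<alpha> a)$p$q = M$p$q" if "p < q" for p q
    using that t[OF that] by (simp add: N_def)
  moreover have "multilin_eval n \<alpha> a \<in> J3"
    using multilin_eval_UT3[OF adm] multilin_eval_diag_entry[OF adm] S0 by (simp add: J3_iff)
  ultimately have "multilin_eval n \<alpha> a = M"
    using M by (intro J3_eqI) (simp_all add: less_3_iff)
  then show "M \<in> multilin_image n \<alpha>"
    using multilin_imageI[OF adm, of \<alpha>] by simp
qed

lemma multilin_image_subset_J3sq:
  assumes "(\<Sum>\<sigma> | \<sigma> permutes {1..n}. \<alpha> \<sigma>) = 0"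
    and "\<forall>m\<in>{1..n}. \<forall>B\<in>Pow ({1..n} - {m}). entry_coeff n \<alpha> m B = 0"
  shows "multilin_image n \<alpha> \<subseteq> J3sq"
proof
  fix M assume M: "M \<in> multilin_image n \<alpha>"
  then obtain a where adm: "\<forall>l\<in>{1..n}. a l \<in> UT3" and "M = multilin_eval n \<alpha> a"
    by (rule multilin_imageE)
  then have "M$p$q = 0" if "(p, q) \<in> {(0, 1), (1, 2)}" for p q
    using multilin_eval_adjacent_entry[OF adm that] assms(2) by simp
  moreover have "M \<in> J3" using M multilin_image_subset_J3[OF assms(1)] by blast
  ultimately show "M \<in> J3sq" by (simp add: J3sq_iff)
qed

lemma multilin_image_scale:
  assumes "n \<ge> 1" "M \<in> multilin_image n \<alpha>"
  shows "msmult c M \<in> multilin_image n \<alpha>"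
proof -
  obtain a where adm: "\<forall>l\<in>{1..n}. a l \<in> UT3" and "M = multilin_eval n \<alpha> a"
    using assms(2) by (rule multilin_imageE)
  then have "msmult c M = multilin_eval n \<alpha> (a(1 := msmult c (a 1)))"
    using assms(1) by (simp add: multilin_eval_scale)
  moreover have "\<forall>l\<in>{1..n}. (a(1 := msmult c (a 1))) l \<in> UT3"
    using adm assms(1) by (simp add: msmult_UT3)
  ultimately show ?thesis using multilin_imageI by metis
qed

lemma scale_closed_subset_J3sq:
  assumes "Z \<subseteq> J3sq" "Z \<noteq> {}" "\<forall>M\<in>Z. \<forall>c. msmult c M \<in> Z"
  shows "Z = {0} \<or> Z = J3sq"
proof (cases "Z \<subseteq> {0}")
  case True
  then show ?thesis using assms(2) by blast
next
  case False
  then obtain M where M: "M \<in> Z" "M \<noteq> 0" by blast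
  then have "M \<in> J3sq" using assms(1) by blast
  then have M02: "M$0$2 \<noteq> 0"
    using M(2) by (simp add: J3sq_iff J3_iff UT3_iff vec_eq_iff forall_3_0)
  have "X \<in> Z" if "X \<in> J3sq" for X
  proof -
    have "X = msmult (X$0$2 / M$0$2) M"
      using that \<open>M \<in> J3sq\<close> M02
      by (simp add: J3sq_iff J3_iff UT3_iff vec_eq_iff forall_3_0 msmult_def)
    then show ?thesis using assms(3) M(1) by metis
  qed
  then show ?thesis using assms(1) by blast
qed

theorem mainTheorem1:
  fixes \<alpha> :: "(nat \<Rightarrow> nat) \<Rightarrow> 'a::field" and n :: nat
  assumes "infinite (UNIV :: 'a set)" and "n \<ge> 1"
  shows "multilin_image n \<alpha> = UT3 \<or> multilin_image n \<alpha> = J3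
       \<or> multilin_image n \<alpha> = J3sq \<or> multilin_image n \<alpha> = {0}"
proof (cases "(\<Sum>\<sigma> | \<sigma> permutes {1..n}. \<alpha> \<sigma>) = 0")
  case False
  then show ?thesis using multilin_image_eq_UT3[OF assms(2)] by blast
next
  case S0: True
  show ?thesis
  proof (cases "\<exists>m\<in>{1..n}. \<exists>T\<in>Pow ({1..n} - {m}). entry_coeff n \<alpha> m T \<noteq> 0")
    case True
    then obtain m T where "m \<in> {1..n}" "T \<subseteq> {1..n} - {m}" "entry_coeff n \<alpha> m T \<noteq> 0"
      by blast
    then have "J3 \<subseteq> multilin_image n \<alpha>"
      using J3_subset_multilin_image[OF assms(1) _ _ _ S0] by blast
    then show ?thesis using multilin_image_subset_J3[OF S0] by blast
  next
    case False
    then have "multilin_image n \<alpha> \<subseteq> J3sq"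
      using multilin_image_subset_J3sq[OF S0] by blast
    moreover have "multilin_image n \<alpha> \<noteq> {}"
      using multilin_imageI[of n "\<lambda>_. mat 1"] mat_1_UT3 by blast
    ultimately have "multilin_image n \<alpha> = {0} \<or> multilin_image n \<alpha> = J3sq"
      using multilin_image_scale[OF assms(2)] by (intro scale_closed_subset_J3sq) auto
    then show ?thesis by blast
  qed
qed

end
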